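(* The distributive law $\zeta\colon T(\partial)\otimes_{\mathbb K}T(\chi)\to T(\chi)\otimes_{\mathbb K}T(\partial)$ descends to distributive laws of $\mathbb K$-algebras $\mathrm{Mag}\otimes_{\mathbb K}\mathrm{Braid}\to\mathrm{Braid}\otimes_{\mathbb K}\mathrm{Mag}$, $\mathrm{Simp}\otimes_{\mathbb K}\mathrm{Braid}\to\mathrm{Braid}\otimes_{\mathbb K}\mathrm{Simp}$, $\mathrm{Mag}\otimes_{\mathbb K}\mathrm{Sym}\to\mathrm{Sym}\otimes_{\mathbb K}\mathrm{Mag}$ and $\mathrm{Simp}\otimes_{\mathbb K}\mathrm{Sym}\to\mathrm{Sym}\otimes_{\mathbb K}\mathrm{Simp}$.
   Context: Let $\Bbbk$ be a field and $\mathbb{K}=\bigoplus_{n\in\mathbb N}\Bbbk1_n$ with $1_n1_m=\delta_{nm}1_n$. A faithful $\mathbb K$-bimodule is $V=\bigoplus_{n,m}V_{n,m}$ with $1_nx1_m=x$ for $x\in V_{n,m}$; $(V\otimes_{\mathbb K}W)_{n,\ell}=\bigoplus_mV_{n,m}\otimes W_{m,\ell}$. A $\mathbb K$-algebra is a faithful $\mathbb K$-bimodule with associative multiplication and unit $\mathbb K\to V$; $T(V)$ denotes the free $\mathbb K$-algebra. $\partial$ has basis $\partial^n_j\in\partial_{n+1,n}$ ($n\ge0$, $0\le j\le n$), $\chi$ has basis $\chi^n_i\in\chi_{n,n}$ ($n\ge1$, $0\le i\le n-1$). $\mathrm{Mag}=T(\partial)/\langle\partial^{n+1}_i\partial^n_j-\partial^{n+1}_{j+1}\partial^n_i:0\le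 i<j\le n\rangle$; $\mathrm{Simp}=T(\partial)/\langle\partial^{n+1}_i\partial^n_j-\partial^{n+1}_{j+1}\partial^n_i:0\le i\le j\le n\rangle$; $\mathrm{Braid}=T(\chi)/\langle\chi^n_i\chi^n_j-\chi^n_j\chi^n_i\ (|i-j|\ge2),\ \chi^n_i\chi^n_{i+1}\chi^n_i-\chi^n_{i+1}\chi^n_i\chi^n_{i+1}\ (0\le i\le n-2)\rangle$; $\mathrm{Sym}=\mathrm{Braid}/\langle\chi^n_i\chi^n_i-1_n\rangle$. A $\mathbb K$-bimodule map $\omega\colon\mathcal B\otimes_{\mathbb K}\mathcal A\to\mathcal A\otimes_{\mathbb K}\mathcal B$ between $\mathbb K$-algebras is a distributive law if $\omega(\mu_{\mathcal B}\otimes\mathcal A)=(\mathcal A\otimes\mu_{\mathcal B})(\omega\otimes\mathcal B)(\mathcal B\otimes\omega)$, $\omega(\mathcal B\otimes\mu_{\mathcal A})=(\mu_{\mathcal A}\otimes\mathcal B)(\mathcal A\otimes\omega)(\omega\otimes\mathcal A)$, $\omega(b\otimes1)=1\otimes b$, $\omega(1\otimes a)=a\otimes1$. $\zeta$ is the distributive law of free $\mathbb K$-algebras defined on generators by $\zeta(\partial_i^n\otimes\chi_j^n)=\chi^{n+1}_{j+1}\otimes\partial^n_i$ if $i<j$; $\chi^{n+1}_{i+1}\chi^{n+1}_i\otimes\partial^n_{i+1}$ if $i=j$; $\chi^{n+1}_{i-1}\chi^{n+1}_i\otimes\partial^n_{i-1}$ if $i=j+1$; $\chi^{n+1}_j\otimes\partial^n_i$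 if $i>j+1$, extended to words by successive application. "Descends" means $\zeta$ induces a well-defined map between the quotient bimodules which is a distributive law. *)

theory Defs
  imports "HOL-Library.Poly_Mapping"
begin

text \<open>A basis element of T(partial) (a composable word in the generators, or a unit 1_m)
is encoded as a pair (m, [j_1,...,j_k]) standing for the product
partial^{m+k-1}_{j_1} partial^{m+k-2}_{j_2} ... partial^{m}_{j_k}, which lies in
T(partial)_{m+k,m}; for k = 0 it is the unit 1_m.  Validity: the t-th letter (from the left,
t = 0..k-1) has superscript m+k-1-t, so its index must be at most that.\<close>

type_synonym pword = "nat \<times> nat list"

text \<open>A basis element of T(chi) is encoded as (n, [i_1,...,i_k]) standing for
chi^n_{i_1} ... chi^n_{i_k} in T(chi)_{n,n} (the unit 1_n if k = 0), with all i_t < n.\<close>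

type_synonym cword = "nat \<times> nat list"

definition pvalid :: "pword \<Rightarrow> bool" where
  "pvalid w \<longleftrightarrow> (\<forall>t < length (snd w). snd w ! t \<le> fst w + (length (snd w) - 1 - t))"

definition cvalid :: "cword \<Rightarrow> bool" where
  "cvalid w \<longleftrightarrow> (\<forall>i \<in> set (snd w). i < fst w)"

text \<open>Concatenation of words and the (partial) product of basis words; a non-composable
product is zero in a K-algebra, encoded by None.\<close>

definition pcat :: "pword \<Rightarrow> pword \<Rightarrow> pword" where
  "pcat x y = (fst y, snd x @ snd y)"

definition pmul :: "pword \<Rightarrow> pword \<Rightarrow> pword option" where
  "pmul x y = (if fst x = fst y + length (snd y) then Some (pcat x y) else None)"

definition ccat :: "cword \<Rightarrow> cword \<Rightarrow> cword" where
  "ccat x y = (fst x, snd x @ snd y)"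

definition cmul :: "cword \<Rightarrow> cword \<Rightarrow> cword option" where
  "cmul x y = (if fst x = fst y then Some (ccat x y) else None)"

text \<open>Composability for the K-balanced tensor products:
(T(partial) \<otimes>_K T(chi)) has basis the pairs (x,y) with right index of x = level of y;
(T(chi) \<otimes>_K T(partial)) has basis the pairs (y,x) with level of y = left index of x.\<close>

definition pc_compat :: "pword \<Rightarrow> cword \<Rightarrow> bool" where
  "pc_compat x y \<longleftrightarrow> fst x = fst y"

definition cp_compat :: "cword \<Rightarrow> pword \<Rightarrow> bool" where
  "cp_compat y x \<longleftrightarrow> fst y = fst x + length (snd x)"

definition vec :: "'b \<Rightarrow> ('b \<Rightarrow>\<^sub>0 'k::zero_neq_one)" where
  "vec b = Poly_Mapping.single b 1"

definition smul :: "'k::ring_1 \<Rightarrow> ('b \<Rightarrow>\<^sub>0 'k) \<Rightarrow> ('b \<Rightarrow>\<^sub>0 'k)" where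
  "smul c v = Poly_Mapping.map ((*) c) v"

definition kspan :: "('b \<Rightarrow>\<^sub>0 'k::ring_1) set \<Rightarrow> ('b \<Rightarrow>\<^sub>0 'k) set" where
  "kspan S = {v. \<exists>F c. finite F \<and> F \<subseteq> S \<and> v = (\<Sum>s\<in>F. smul (c s) s)}"

definition fspace :: "('b \<Rightarrow> bool) \<Rightarrow> ('b \<Rightarrow>\<^sub>0 'k::zero) set" where
  "fspace valid = {v. \<forall>b\<in>Poly_Mapping.keys v. valid b}"

definition mulv :: "('b \<Rightarrow> 'b \<Rightarrow> 'b option) \<Rightarrow> ('b \<Rightarrow>\<^sub>0 'k::ring_1) \<Rightarrow> ('b \<Rightarrow>\<^sub>0 'k) \<Rightarrow> ('b \<Rightarrow>\<^sub>0 'k)" where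
  "mulv bm u v = (\<Sum>a\<in>Poly_Mapping.keys u. \<Sum>b\<in>Poly_Mapping.keys v.
      (case bm a b of None \<Rightarrow> 0 | Some c \<Rightarrow> Poly_Mapping.single c (Poly_Mapping.lookup u a * Poly_Mapping.lookup v b)))"

definition ideal_gen :: "('b \<Rightarrow> bool) \<Rightarrow> ('b \<Rightarrow> 'b \<Rightarrow> 'b option) \<Rightarrow> ('b \<Rightarrow>\<^sub>0 'k::ring_1) set \<Rightarrow> ('b \<Rightarrow>\<^sub>0 'k) set" where
  "ideal_gen valid bm R = kspan {mulv bm (mulv bm (vec a) r) (vec b) | a b r. valid a \<and> valid b \<and> r \<in> R}"

definition tens :: "('a \<Rightarrow> 'b \<Rightarrow> bool) \<Rightarrow> ('a \<Rightarrow>\<^sub>0 'k::ring_1) \<Rightarrow> ('b \<Rightarrow>\<^sub>0 'k) \<Rightarrow> ('a \<times> 'b \<Rightarrow>\<^sub>0 'k)" where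
  "tens cpt u v = (\<Sum>a\<in>Poly_Mapping.keys u. \<Sum>b\<in>Poly_Mapping.keys v.
      (if cpt a b then Poly_Mapping.single (a, b) (Poly_Mapping.lookup u a * Poly_Mapping.lookup v b) else 0))"

text \<open>Kernel of the projection (T(V) \<otimes>_K T(W)) \<rightarrow> (T(V)/I \<otimes>_K T(W)/J), namely
I \<otimes> T(W) + T(V) \<otimes> J.\<close>

definition tens_ker :: "('a \<Rightarrow> 'b \<Rightarrow> bool) \<Rightarrow> ('a \<Rightarrow> bool) \<Rightarrow> ('b \<Rightarrow> bool) \<Rightarrow>
    ('a \<Rightarrow>\<^sub>0 'k::ring_1) set \<Rightarrow> ('b \<Rightarrow>\<^sub>0 'k) set \<Rightarrow> ('a \<times> 'b \<Rightarrow>\<^sub>0 'k) set" where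
  "tens_ker cpt validA validB I J =
     kspan ({tens cpt i w | i w. i \<in> I \<and> w \<in> fspace validB}
          \<union> {tens cpt u j | u j. u \<in> fspace validA \<and> j \<in> J})"

text \<open>zeta(partial^n_i \<otimes> chi^n_j), returning the chi-word (at level n+1) and the new
index of partial^n.\<close>

definition zgen :: "nat \<Rightarrow> nat \<Rightarrow> nat list \<times> nat" where
  "zgen i j =
     (if i < j then ([j + 1], i)
      else if i = j then ([i + 1, i], i + 1)
      else if i = j + 1 then ([i - 1, i], i - 1)
      else ([j], i))"

text \<open>Pass one generator partial through a chi-word, letter by letter from the left
(omega(b \<otimes> a_1 a_2) = (mu \<otimes> B)(A \<otimes> omega)(omega \<otimes> A)).\<close>

fun pass1 :: "nat \<Rightarrow> nat list \<Rightarrow> nat list \<times> nat" where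
  "pass1 i [] = ([], i)"
| "pass1 i (j # js) = (let (c, i') = zgen i j; (c', i'') = pass1 i' js in (c @ c', i''))"

text \<open>Pass a partial-word through a chi-word, the rightmost partial letter first
(omega(b_1 b_2 \<otimes> a) = (A \<otimes> mu)(omega \<otimes> B)(B \<otimes> omega)).\<close>

fun passw :: "nat list \<Rightarrow> nat list \<Rightarrow> nat list \<times> nat list" where
  "passw [] cs = (cs, [])"
| "passw (d # ds) cs = (let (cs1, ds1) = passw ds cs; (cs2, d') = pass1 d cs1 in (cs2, d' # ds1))"

definition zeta :: "pword \<Rightarrow> cword \<Rightarrow> cword \<times> pword" where
  "zeta x y = (let (cs, ds) = passw (snd x) (snd y) in ((fst x + length (snd x), cs), (fst x, ds)))"

definition zetav :: "(pword \<times> cword \<Rightarrow>\<^sub>0 'k::ring_1) \<Rightarrow> (cword \<times> pword \<Rightarrow>\<^sub>0 'k)" where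
  "zetav v = (\<Sum>p\<in>Poly_Mapping.keys v. Poly_Mapping.single (case_prod zeta p) (Poly_Mapping.lookup v p))"

text \<open>partial^{n+1}_i partial^n_j - partial^{n+1}_{j+1} partial^n_i, encoded (n,[i,j]) - (n,[j+1,i]).\<close>

definition mag_rels :: "(pword \<Rightarrow>\<^sub>0 'k::ring_1) set" where
  "mag_rels = {vec (n, [i, j]) - vec (n, [j + 1, i]) | n i j. i < j \<and> j \<le> n}"

definition simp_rels :: "(pword \<Rightarrow>\<^sub>0 'k::ring_1) set" where
  "simp_rels = {vec (n, [i, j]) - vec (n, [j + 1, i]) | n i j. i \<le> j \<and> j \<le> n}"

definition braid_rels :: "(cword \<Rightarrow>\<^sub>0 'k::ring_1) set" where
  "braid_rels =
     {vec (n, [i, j]) - vec (n, [j, i]) | n i j. i < n \<and> j < n \<and> (i + 2 \<le> j \<or> j + 2 \<le> i)}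
   \<union> {vec (n, [i, i + 1, i]) - vec (n, [i + 1, i, i + 1]) | n i. i + 2 \<le> n}"

definition sym_rels :: "(cword \<Rightarrow>\<^sub>0 'k::ring_1) set" where
  "sym_rels = braid_rels \<union> {vec (n, [i, i]) - vec (n, []) | n i. i < n}"

text \<open>With B = T(partial)/I_P and A = T(chi)/I_C, zeta descends if it maps the kernel of
T(partial)\<otimes>T(chi) \<rightarrow> B\<otimes>A into the kernel of T(chi)\<otimes>T(partial) \<rightarrow> A\<otimes>B (so that the
induced map B\<otimes>A \<rightarrow> A\<otimes>B is well defined), and the induced map satisfies the four
distributive-law axioms.  Equalities of the induced linear maps on the quotients are
expressed as: the two representatives' images differ by an element of the target kernel,
checked on the classes of basis tensors (which span the quotient tensor products).\<close>

definition descends :: "(pword \<Rightarrow>\<^sub>0 'k::field) set \<Rightarrow> (cword \<Rightarrow>\<^sub>0 'k) set \<Rightarrow> bool" where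
  "descends RP RC \<longleftrightarrow>
    (let IP = ideal_gen pvalid pmul RP;
         IC = ideal_gen cvalid cmul RC;
         Ksrc = tens_ker pc_compat pvalid cvalid IP IC;
         Ktgt = tens_ker cp_compat cvalid pvalid IC IP
     in (\<forall>v\<in>Ksrc. zetav v \<in> Ktgt)
      \<and> (\<forall>x1 x2 y. pvalid x1 \<and> pvalid x2 \<and> cvalid y \<and>
            fst x1 = fst x2 + length (snd x2) \<and> fst y = fst x2 \<longrightarrow>
            vec (zeta (pcat x1 x2) y)
              - vec (let (y', x2') = zeta x2 y; (y'', x1') = zeta x1 y' in (y'', pcat x1' x2'))
            \<in> Ktgt)
      \<and> (\<forall>x y1 y2. pvalid x \<and> cvalid y1 \<and> cvalid y2 \<and> fst y1 = fst x \<and> fst y2 = fst x \<longrightarrow>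
            vec (zeta x (ccat y1 y2))
              - vec (let (y1', x') = zeta x y1; (y2', x'') = zeta x' y2 in (ccat y1' y2', x''))
            \<in> Ktgt)
      \<and> (\<forall>x. pvalid x \<longrightarrow> vec (zeta x (fst x, [])) - vec ((fst x + length (snd x), []), x) \<in> Ktgt)
      \<and> (\<forall>y. cvalid y \<longrightarrow> vec (zeta (fst y, []) y) - vec (y, (fst y, [])) \<in> Ktgt))"

end

theory Submission
  imports Defs "HOL.Modules"
begin

(* zeta passes a face word through a chi-word letter by letter, so it is multiplicative on words
   and the four distributive-law axioms hold already in the free algebras.  What needs proof is that
   zeta maps the kernel of T(partial) (x) T(chi) -> B (x) A into the kernel of
   T(chi) (x) T(partial) -> A (x) B.  The former is spanned by differences of basis tensors whose
   face words differ by one Mag/Simp relator, or whose chi-words differ by one braid (or involution)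
   relator.  So two local facts suffice: passing one face letter through a chi-relator yields the
   same outgoing face letter and equivalent chi-words; and passing a face relator through a single
   chi letter yields equivalent chi-words and face words that are equal or again a face relator.
   Both are finite case analyses on the relative position of the indices, settled by explicit
   rewriting chains. *)

lemma lookup_smul: "Poly_Mapping.lookup (smul c v) k = c * Poly_Mapping.lookup v k"
  unfolding smul_def by (simp add: Poly_Mapping.map.rep_eq when_def)

interpretation pm: module "smul :: 'k::comm_ring_1 \<Rightarrow> ('b \<Rightarrow>\<^sub>0 'k) \<Rightarrow> ('b \<Rightarrow>\<^sub>0 'k)"
  by standard (auto intro!: poly_mapping_eqI simp: lookup_smul lookup_add algebra_simps)

lemma kspan_eq_span: "kspan S = pm.span S"
  unfolding kspan_def pm.span_explicit by blast

definition lin_ext :: "('b \<Rightarrow> ('c \<Rightarrow>\<^sub>0 'k::comm_ring_1)) \<Rightarrow> ('b \<Rightarrow>\<^sub>0 'k) \<Rightarrow> ('c \<Rightarrow>\<^sub>0 'k)" where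
  "lin_ext g v = (\<Sum>b\<in>Poly_Mapping.keys v. smul (Poly_Mapping.lookup v b) (g b))"

lemma lin_ext_superset:
  assumes "finite S" "Poly_Mapping.keys v \<subseteq> S"
  shows "lin_ext g v = (\<Sum>b\<in>S. smul (Poly_Mapping.lookup v b) (g b))"
  unfolding lin_ext_def
  by (rule sum.mono_neutral_left) (use assms in \<open>auto simp: in_keys_iff\<close>)

lemma lin_ext_add: "lin_ext g (u + v) = lin_ext g u + lin_ext g v"
proof -
  let ?S = "Poly_Mapping.keys u \<union> Poly_Mapping.keys v"
  have "lin_ext g (u + v) = (\<Sum>b\<in>?S. smul (Poly_Mapping.lookup (u + v) b) (g b))"
    by (rule lin_ext_superset) (auto simp: keys_add)
  also have "\<dots> = (\<Sum>b\<in>?S. smul (Poly_Mapping.lookup u b) (g b))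
                 + (\<Sum>b\<in>?S. smul (Poly_Mapping.lookup v b) (g b))"
    by (simp add: lookup_add pm.scale_left_distrib sum.distrib)
  also have "\<dots> = lin_ext g u + lin_ext g v"
    by (subst (1 2) lin_ext_superset[where S = ?S]) auto
  finally show ?thesis .
qed

lemma lin_ext_smul: "lin_ext g (smul c v) = smul c (lin_ext g v)"
proof -
  have "lin_ext g (smul c v) = (\<Sum>b\<in>Poly_Mapping.keys v. smul (Poly_Mapping.lookup (smul c v) b) (g b))"
    by (rule lin_ext_superset) (auto simp: in_keys_iff lookup_smul)
  then show ?thesis
    by (simp add: lin_ext_def lookup_smul pm.scale_sum_right)
qed

lemma lin_ext_zero [simp]: "lin_ext g 0 = 0"
  by (simp add: lin_ext_def)

lemma lin_ext_diff: "lin_ext g (u - v) = lin_ext g u - lin_ext g v"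
proof -
  have "lin_ext g (- v) = - lin_ext g v"
    using lin_ext_add[of g v "- v"] by (simp add: eq_neg_iff_add_eq_0 add.commute)
  then show ?thesis
    using lin_ext_add[of g u "- v"] by simp
qed

lemma lin_ext_vec [simp]: "lin_ext g (vec b :: _ \<Rightarrow>\<^sub>0 'k::comm_ring_1) = g b"
  by (simp add: lin_ext_def vec_def)

lemma lin_ext_swap:
  "lin_ext (\<lambda>b. lin_ext (\<lambda>a. f a b) u) v = lin_ext (\<lambda>a. lin_ext (\<lambda>b. f a b) v) u"
  by (simp add: lin_ext_def pm.scale_sum_right sum.swap[of _ "Poly_Mapping.keys u"] mult.commute)

lemma lin_ext_in_span:
  assumes "v \<in> pm.span S" "\<And>s. s \<in> S \<Longrightarrow> lin_ext g s \<in> pm.span T"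
  shows "lin_ext g v \<in> pm.span T"
  using assms(1)
proof (induction rule: pm.span_induct_alt)
  case base
  then show ?case by (simp add: pm.span_zero)
next
  case (step c x y)
  then show ?case
    by (simp add: lin_ext_add lin_ext_smul pm.span_add pm.span_scale assms(2))
qed

lemma lin_ext_in_span_keys:
  assumes "\<And>b. b \<in> Poly_Mapping.keys v \<Longrightarrow> g b \<in> pm.span T"
  shows "lin_ext g v \<in> pm.span T"
  unfolding lin_ext_def by (rule pm.span_sum) (use assms in \<open>auto intro: pm.span_scale\<close>)

lemma single_eq_smul_vec: "Poly_Mapping.single c (x::'k::comm_ring_1) = smul x (vec c)"
  by (rule poly_mapping_eqI) (simp add: lookup_smul vec_def lookup_single when_def)

definition opt_vec :: "'b option \<Rightarrow> ('b \<Rightarrow>\<^sub>0 'k::comm_ring_1)" where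
  "opt_vec ox = (case ox of None \<Rightarrow> 0 | Some c \<Rightarrow> vec c)"

lemma mulv_eq_lin_ext: "mulv bm u v = lin_ext (\<lambda>a. lin_ext (\<lambda>b. opt_vec (bm a b)) v) u"
  unfolding mulv_def lin_ext_def opt_vec_def
  by (simp add: pm.scale_sum_right, intro sum.cong refl)
    (auto simp: single_eq_smul_vec mult.commute split: option.split)

lemma mulv_vec_vec_diff:
  "mulv bm (mulv bm (vec a) (vec s1 - vec s2 :: _ \<Rightarrow>\<^sub>0 'k::comm_ring_1)) (vec b) =
   lin_ext (\<lambda>c. opt_vec (bm c b)) (opt_vec (bm a s1) - opt_vec (bm a s2))"
  by (simp add: mulv_eq_lin_ext lin_ext_diff)

definition tens_basis :: "('a \<Rightarrow> 'b \<Rightarrow> bool) \<Rightarrow> 'a \<Rightarrow> 'b \<Rightarrow> ('a \<times> 'b \<Rightarrow>\<^sub>0 'k::comm_ring_1)" where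
  "tens_basis cpt a b = (if cpt a b then vec (a, b) else 0)"

lemma tens_eq_lin_ext: "tens cpt u v = lin_ext (\<lambda>a. lin_ext (tens_basis cpt a) v) u"
  unfolding tens_def lin_ext_def tens_basis_def
  by (simp add: pm.scale_sum_right, intro sum.cong refl)
    (simp add: single_eq_smul_vec mult.commute)

lemma tens_vec_left: "tens cpt (vec a) v = lin_ext (tens_basis cpt a) v"
  by (simp add: tens_eq_lin_ext)

lemma tens_vec_right: "tens cpt u (vec b) = lin_ext (\<lambda>a. tens_basis cpt a b) u"
  by (simp add: tens_eq_lin_ext)

lemma tens_in_span_left:
  assumes "i \<in> pm.span G" "w \<in> fspace validB"
  shows "tens cpt i w \<in> pm.span {tens cpt g (vec c) | g c. g \<in> G \<and> validB c}" (is "_ \<in> pm.span ?T")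
proof -
  have "lin_ext (\<lambda>a. lin_ext (tens_basis cpt a) w) i \<in> pm.span ?T"
    using assms(1)
  proof (rule lin_ext_in_span)
    fix g assume "g \<in> G"
    have "lin_ext (\<lambda>a. lin_ext (tens_basis cpt a) w) g = lin_ext (\<lambda>c. tens cpt g (vec c)) w"
      using lin_ext_swap[of "tens_basis cpt" g w] by (simp add: tens_vec_right)
    also have "\<dots> \<in> pm.span ?T"
      by (rule lin_ext_in_span_keys, rule pm.span_base)
        (use \<open>g \<in> G\<close> assms(2) in \<open>auto simp: fspace_def\<close>)
    finally show "lin_ext (\<lambda>a. lin_ext (tens_basis cpt a) w) g \<in> pm.span ?T" .
  qed
  then show ?thesis by (simp add: tens_eq_lin_ext)
qed

lemma tens_in_span_right:
  assumes "u \<in> fspace validA" "j \<in> pm.span G"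
  shows "tens cpt u j \<in> pm.span {tens cpt (vec a) g | a g. validA a \<and> g \<in> G}" (is "_ \<in> pm.span ?T")
proof -
  have "lin_ext (\<lambda>a. tens cpt (vec a) j) u \<in> pm.span ?T"
  proof (rule lin_ext_in_span_keys)
    fix a assume "a \<in> Poly_Mapping.keys u"
    then have "validA a" using assms(1) by (auto simp: fspace_def)
    have "lin_ext (tens_basis cpt a) j \<in> pm.span ?T"
      using assms(2)
    proof (rule lin_ext_in_span)
      fix g assume "g \<in> G"
      with \<open>validA a\<close> show "lin_ext (tens_basis cpt a) g \<in> pm.span ?T"
        by (intro pm.span_base) (auto simp: tens_vec_left)
    qed
    then show "tens cpt (vec a) j \<in> pm.span ?T" by (simp add: tens_vec_left)
  qed
  then show ?thesis by (simp add: tens_eq_lin_ext tens_vec_left)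
qed

lemma zetav_eq_lin_ext: "zetav v = lin_ext (\<lambda>p. vec (case_prod zeta p)) (v :: _ \<Rightarrow>\<^sub>0 'k::comm_ring_1)"
  unfolding zetav_def lin_ext_def by (simp add: single_eq_smul_vec)

section \<open>Passing face words through chi-words\<close>

lemma pass1_append:
  "pass1 i (xs @ ys) = (case pass1 i xs of (c, i') \<Rightarrow> case pass1 i' ys of (c', i'') \<Rightarrow> (c @ c', i''))"
  by (induction xs arbitrary: i) (auto split: prod.splits)

lemma passw_append_left:
  "passw (ds1 @ ds2) cs =
     (case passw ds2 cs of (cs1, e2) \<Rightarrow> case passw ds1 cs1 of (cs2, e1) \<Rightarrow> (cs2, e1 @ e2))"
  by (induction ds1) (auto split: prod.splits)

lemma passw_append_right:
  "passw ds (cs1 @ cs2) =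
     (case passw ds cs1 of (c1, ds1) \<Rightarrow> case passw ds1 cs2 of (c2, ds2) \<Rightarrow> (c1 @ c2, ds2))"
  by (induction ds) (auto split: prod.splits simp: pass1_append)

lemma passw_Nil_right: "passw ds [] = ([], ds)"
  by (induction ds) auto

lemma length_passw: "length (snd (passw ds cs)) = length ds"
  by (induction ds) (auto split: prod.splits)

lemma pvalid_Nil [simp]: "pvalid (m, [])"
  by (simp add: pvalid_def)

lemma pvalid_Cons: "pvalid (m, d # ds) \<longleftrightarrow> d \<le> m + length ds \<and> pvalid (m, ds)"
  unfolding pvalid_def by (auto simp: less_Suc_eq_0_disj)

lemma pvalid_append: "pvalid (m, a @ b) \<longleftrightarrow> pvalid (m + length b, a) \<and> pvalid (m, b)"
  by (induction a) (auto simp: pvalid_Cons)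

lemma pass1_bounded:
  assumes "i \<le> n" "\<forall>j\<in>set js. j < n"
  shows "(\<forall>k\<in>set (fst (pass1 i js)). k < Suc n) \<and> snd (pass1 i js) \<le> n"
  using assms
proof (induction js arbitrary: i)
  case Nil
  then show ?case by simp
next
  case (Cons j js)
  obtain c i' where z: "zgen i j = (c, i')" by force
  from Cons.prems z have "\<forall>k\<in>set c. k < Suc n" "i' \<le> n"
    by (auto simp: zgen_def split: if_splits)
  with Cons.IH[of i'] Cons.prems show ?case
    by (auto simp: z split: prod.splits)
qed

lemma passw_valid:
  assumes "pvalid (m, ds)" "\<forall>k\<in>set cs. k < m"
  shows "(\<forall>k\<in>set (fst (passw ds cs)). k < m + length ds) \<and> pvalid (m, snd (passw ds cs))"
  using assms
proof (induction ds)
  case Nil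
  then show ?case by simp
next
  case (Cons d ds)
  obtain cs1 ds1 where p: "passw ds cs = (cs1, ds1)" by force
  obtain cs2 d' where q: "pass1 d cs1 = (cs2, d')" by force
  from Cons.prems have d: "d \<le> m + length ds" "pvalid (m, ds)" by (auto simp: pvalid_Cons)
  with Cons.IH Cons.prems p have cs1: "\<forall>k\<in>set cs1. k < m + length ds" "pvalid (m, ds1)" by auto
  from pass1_bounded[OF d(1) cs1(1)] q
  have "\<forall>k\<in>set cs2. k < Suc (m + length ds)" "d' \<le> m + length ds" by auto
  moreover have "length ds1 = length ds" using length_passw[of ds cs] p by simp
  ultimately show ?case using cs1 by (simp add: p q pvalid_Cons)
qed

lemma zeta_eq: "passw ds cs = (cs', ds') \<Longrightarrow> zeta (m, ds) (k, cs) = ((m + length ds, cs'), (m, ds'))"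
  by (simp add: zeta_def)

lemma zeta_valid:
  assumes "pvalid x" "cvalid y" "fst y = fst x"
  shows "cvalid (fst (zeta x y)) \<and> pvalid (snd (zeta x y))
     \<and> fst (fst (zeta x y)) = fst x + length (snd x) \<and> fst (snd (zeta x y)) = fst x
     \<and> length (snd (snd (zeta x y))) = length (snd x)"
proof -
  obtain m ds cs where x: "x = (m, ds)" and y: "y = (m, cs)"
    using assms(3) by (cases x, cases y) auto
  obtain cs' ds' where p: "passw ds cs = (cs', ds')" by force
  from passw_valid[of m ds cs] assms p have "\<forall>k\<in>set cs'. k < m + length ds" "pvalid (m, ds')"
    by (auto simp: x y cvalid_def)
  moreover have "length ds' = length ds" using length_passw[of ds cs] p by simp
  ultimately show ?thesis by (simp add: zeta_def x y p cvalid_def)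
qed

lemma zeta_pcat:
  assumes "fst x1 = fst x2 + length (snd x2)"
  shows "zeta (pcat x1 x2) y =
    (case zeta x2 y of (y', x2') \<Rightarrow> case zeta x1 y' of (y'', x1') \<Rightarrow> (y'', pcat x1' x2'))"
proof -
  obtain cs1 e2 where p1: "passw (snd x2) (snd y) = (cs1, e2)" by force
  obtain cs2 e1 where p2: "passw (snd x1) cs1 = (cs2, e1)" by force
  have "length e2 = length (snd x2)" using length_passw[of "snd x2" "snd y"] p1 by simp
  then show ?thesis
    using assms by (simp add: zeta_def pcat_def passw_append_left p1 p2)
qed

lemma zeta_ccat:
  assumes "fst y1 = fst x"
  shows "zeta x (ccat y1 y2) =
    (case zeta x y1 of (y1', x') \<Rightarrow> case zeta x' y2 of (y2', x'') \<Rightarrow> (ccat y1' y2', x''))"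
proof -
  obtain c1 d1 where p1: "passw (snd x) (snd y1) = (c1, d1)" by force
  obtain c2 d2 where p2: "passw d1 (snd y2) = (c2, d2)" by force
  have "length d1 = length (snd x)" using length_passw[of "snd x" "snd y1"] p1 by simp
  then show ?thesis
    using assms by (simp add: zeta_def ccat_def passw_append_right p1 p2)
qed

lemma zeta_chi_unit: "zeta x (fst x, []) = ((fst x + length (snd x), []), x)"
  by (simp add: zeta_def passw_Nil_right)

lemma zeta_face_unit: "zeta (fst y, []) y = (y, (fst y, []))"
  by (simp add: zeta_def)

definition word_step :: "(nat \<Rightarrow> nat list \<Rightarrow> nat list \<Rightarrow> bool) \<Rightarrow> nat \<Rightarrow> nat list \<Rightarrow> nat list \<Rightarrow> bool" where
  "word_step cr n u v \<longleftrightarrow> (\<exists>c e p q. u = c @ p @ e \<and> v = c @ q @ e \<and> cr n p q)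
      \<and> (\<forall>k\<in>set u. k < n) \<and> (\<forall>k\<in>set v. k < n)"

abbreviation word_conv :: "(nat \<Rightarrow> nat list \<Rightarrow> nat list \<Rightarrow> bool) \<Rightarrow> nat \<Rightarrow> nat list \<Rightarrow> nat list \<Rightarrow> bool" where
  "word_conv cr n \<equiv> (word_step cr n)\<^sup>*\<^sup>*"

lemma word_stepI:
  assumes "u = c @ p @ e" "v = c @ q @ e" "cr n p q" "\<forall>k\<in>set u. k < n" "\<forall>k\<in>set v. k < n"
  shows "word_step cr n u v"
  unfolding word_step_def using assms by blast

lemma word_stepE:
  assumes "word_step cr n u v"
  obtains c e p q where "u = c @ p @ e" "v = c @ q @ e" "cr n p q" "\<forall>k\<in>set u. k < n" "\<forall>k\<in>set v. k < n"
  using assms unfolding word_step_def by blast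

lemma word_conv_bounded: "word_conv cr n u v \<Longrightarrow> \<forall>k\<in>set u. k < n \<Longrightarrow> \<forall>k\<in>set v. k < n"
  by (induction rule: rtranclp_induct) (simp_all add: word_step_def)

lemma word_conv_context:
  assumes "word_conv cr n u v" "\<forall>k\<in>set c. k < n" "\<forall>k\<in>set e. k < n"
  shows "word_conv cr n (c @ u @ e) (c @ v @ e)"
  using assms(1)
proof (induction rule: rtranclp_induct)
  case base
  then show ?case by simp
next
  case (step w v)
  from step(2) obtain c' e' p q where "w = c' @ p @ e'" "v = c' @ q @ e'" "cr n p q"
    "\<forall>k\<in>set w. k < n" "\<forall>k\<in>set v. k < n" by (rule word_stepE)
  then have "word_step cr n (c @ w @ e) (c @ v @ e)"
    using assms(2,3) by (intro word_stepI[of _ "c @ c'" p "e' @ e" _ q]) auto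
  with step(3) show ?case by (rule rtranclp.rtrancl_into_rtrancl)
qed

lemma word_conv_append:
  assumes "word_conv cr n s1 s2" "word_conv cr n t1 t2" "\<forall>k\<in>set s1. k < n" "\<forall>k\<in>set t1. k < n"
  shows "word_conv cr n (s1 @ t1) (s2 @ t2)"
proof -
  have "word_conv cr n ([] @ s1 @ t1) ([] @ s2 @ t1)"
    by (rule word_conv_context[OF assms(1)]) (simp_all add: assms(4))
  moreover have "word_conv cr n (s2 @ t1 @ []) (s2 @ t2 @ [])"
    by (rule word_conv_context[OF assms(2) word_conv_bounded[OF assms(1,3)]]) simp
  ultimately show ?thesis by simp
qed

lemma word_conv_mono:
  assumes "\<And>n p q. cr n p q \<Longrightarrow> cr' n p q" "word_conv cr n u v"
  shows "word_conv cr' n u v"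
  using assms(2)
proof (induction rule: rtranclp_induct)
  case (step w v)
  from step(2) obtain c e p q where "w = c @ p @ e" "v = c @ q @ e" "cr n p q"
    "\<forall>k\<in>set w. k < n" "\<forall>k\<in>set v. k < n" by (rule word_stepE)
  then have "word_step cr' n w v"
    by (blast intro: word_stepI assms(1))
  with step(3) show ?case by (rule rtranclp.rtrancl_into_rtrancl)
qed simp

lemma word_conv_sym:
  assumes "\<And>n p q. cr n p q \<Longrightarrow> cr n q p" "word_conv cr n u v"
  shows "word_conv cr n v u"
  using assms(2)
proof (induction rule: rtranclp_induct)
  case (step w v)
  from step(2) obtain c e p q where "w = c @ p @ e" "v = c @ q @ e" "cr n p q"
    "\<forall>k\<in>set w. k < n" "\<forall>k\<in>set v. k < n" by (rule word_stepE)
  then have "word_step cr n v w"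
    by (blast intro: word_stepI assms(1))
  then show ?case by (rule converse_rtranclp_into_rtranclp[OF _ step(3)])
qed simp

text \<open>The relators partial^{n+1}_i partial^n_j = partial^{n+1}_{j+1} partial^n_i, read in
both directions, with Q i j being i < j for Mag and i \<le> j for Simp.\<close>

definition face_rel :: "(nat \<Rightarrow> nat \<Rightarrow> bool) \<Rightarrow> nat \<Rightarrow> nat list \<Rightarrow> nat list \<Rightarrow> bool" where
  "face_rel Q n p q \<longleftrightarrow>
     (\<exists>i j. Q i j \<and> j \<le> n \<and> (p = [i, j] \<and> q = [j + 1, i] \<or> p = [j + 1, i] \<and> q = [i, j]))"

definition face_step :: "(nat \<Rightarrow> nat \<Rightarrow> bool) \<Rightarrow> pword \<Rightarrow> pword \<Rightarrow> bool" where
  "face_step Q x x' \<longleftrightarrow> fst x = fst x' \<and>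
     (\<exists>a b p q. snd x = a @ p @ b \<and> snd x' = a @ q @ b \<and> face_rel Q (fst x + length b) p q)
     \<and> pvalid x \<and> pvalid x'"

lemma face_stepI:
  assumes "face_rel Q (m + length b) p q" "pvalid (m, a @ p @ b)" "pvalid (m, a @ q @ b)"
  shows "face_step Q (m, a @ p @ b) (m, a @ q @ b)"
  using assms unfolding face_step_def by auto

lemma face_rel_sym: "face_rel Q n p q \<Longrightarrow> face_rel Q n q p"
  unfolding face_rel_def by auto

lemma face_rel_pairs:
  "face_rel Q n [x, y] [z, w] \<longleftrightarrow>
     (Q x y \<and> y \<le> n \<and> z = y + 1 \<and> w = x) \<or> (Q z w \<and> w \<le> n \<and> x = w + 1 \<and> y = z)"
  unfolding face_rel_def by auto

locale pass_chi_relators =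
  fixes cr :: "nat \<Rightarrow> nat list \<Rightarrow> nat list \<Rightarrow> bool"
  assumes pass1_relator: "\<And>n p q i. cr n p q \<Longrightarrow> i \<le> n \<Longrightarrow>
     snd (pass1 i p) = snd (pass1 i q) \<and> word_conv cr (Suc n) (fst (pass1 i p)) (fst (pass1 i q))"
begin

lemma pass1_word_conv:
  assumes "word_conv cr n u v" "i \<le> n"
  shows "snd (pass1 i u) = snd (pass1 i v) \<and> word_conv cr (Suc n) (fst (pass1 i u)) (fst (pass1 i v))"
  using assms(1)
proof (induction rule: rtranclp_induct)
  case base
  then show ?case by simp
next
  case (step w v)
  from step(2) obtain c e p q where w: "w = c @ p @ e" and v: "v = c @ q @ e" and r: "cr n p q"
    and bw: "\<forall>k\<in>set w. k < n" by (rule word_stepE)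
  obtain c' i1 where pc: "pass1 i c = (c', i1)" by force
  obtain p' i2 where pp: "pass1 i1 p = (p', i2)" by force
  obtain q' i2' where pq: "pass1 i1 q = (q', i2')" by force
  obtain e' i3 where pe: "pass1 i2 e = (e', i3)" by force
  have c': "\<forall>k\<in>set c'. k < Suc n" "i1 \<le> n"
    using pass1_bounded[of i n c] pc bw w assms(2) by auto
  from pass1_relator[OF r c'(2)] pp pq have "i2' = i2" and pq': "word_conv cr (Suc n) p' q'" by auto
  have "i2 \<le> n" using pass1_bounded[of i1 n p] pp bw w c' by auto
  then have e': "\<forall>k\<in>set e'. k < Suc n" using pass1_bounded[of i2 n e] pe bw w by auto
  have "pass1 i w = (c' @ p' @ e', i3)" by (simp add: w pass1_append pc pp pe)
  moreover have "pass1 i v = (c' @ q' @ e', i3)" by (simp add: v pass1_append pc pq pe \<open>i2' = i2\<close>)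
  moreover have "word_conv cr (Suc n) (c' @ p' @ e') (c' @ q' @ e')"
    by (rule word_conv_context[OF pq' c'(1) e'])
  ultimately show ?case using step(3) by auto
qed

lemma passw_word_conv:
  assumes "word_conv cr m u v" "pvalid (m, ds)"
  shows "snd (passw ds u) = snd (passw ds v)
    \<and> word_conv cr (m + length ds) (fst (passw ds u)) (fst (passw ds v))"
  using assms(2)
proof (induction ds)
  case Nil
  then show ?case using assms(1) by simp
next
  case (Cons d ds)
  obtain u1 e1 where pu: "passw ds u = (u1, e1)" by force
  obtain v1 e1' where pv: "passw ds v = (v1, e1')" by force
  from Cons.prems have "d \<le> m + length ds" "pvalid (m, ds)" by (auto simp: pvalid_Cons)
  with Cons.IH pu pv have "e1' = e1" "word_conv cr (m + length ds) u1 v1" by auto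
  with pass1_word_conv[of "m + length ds" u1 v1 d] \<open>d \<le> m + length ds\<close> show ?case
    by (auto simp: pu pv split: prod.splits)
qed

lemma zeta_word_step:
  assumes "word_step cr m u v" "fst x = m" "pvalid x"
  shows "\<exists>N c c' w. zeta x (m, u) = ((N, c), w) \<and> zeta x (m, v) = ((N, c'), w) \<and> word_conv cr N c c'"
proof -
  obtain ds where x: "x = (m, ds)" using assms(2) by (cases x) auto
  from passw_word_conv[OF r_into_rtranclp[of "word_step cr m", OF assms(1)], of ds] assms(3) show ?thesis
    by (auto simp: x zeta_def split: prod.splits)
qed

end

locale pass_face_relators = pass_chi_relators +
  fixes Q :: "nat \<Rightarrow> nat \<Rightarrow> bool"
  assumes face_order: "\<And>i j. Q i j \<Longrightarrow> i \<le> j"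
    and passw_face_relator: "\<And>n p q k. face_rel Q n p q \<Longrightarrow> k < n \<Longrightarrow>
      word_conv cr (n + 2) (fst (passw p [k])) (fst (passw q [k])) \<and>
      (snd (passw p [k]) = snd (passw q [k]) \<or> face_rel Q n (snd (passw p [k])) (snd (passw q [k])))"
begin

lemma face_rel_valid: "face_rel Q n p q \<Longrightarrow> pvalid (n, p) \<and> pvalid (n, q) \<and> length p = 2 \<and> length q = 2"
  by (auto simp: face_rel_def pvalid_Cons dest: face_order)

lemma passw_face_rel:
  assumes "face_rel Q n p q" "\<forall>k\<in>set cs. k < n"
  shows "word_conv cr (n + 2) (fst (passw p cs)) (fst (passw q cs)) \<and>
     (snd (passw p cs) = snd (passw q cs) \<or> face_rel Q n (snd (passw p cs)) (snd (passw q cs)))"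
  using assms
proof (induction cs arbitrary: p q)
  case Nil
  then show ?case by (simp add: passw_Nil_right)
next
  case (Cons k cs)
  obtain s1 p1 where a: "passw p [k] = (s1, p1)" by force
  obtain s2 q1 where b: "passw q [k] = (s2, q1)" by force
  obtain t1 p2 where c: "passw p1 cs = (t1, p2)" by force
  obtain t2 q2 where d: "passw q1 cs = (t2, q2)" by force
  have k: "k < n" "\<forall>k\<in>set cs. k < n" using Cons.prems by auto
  from passw_face_relator[OF Cons.prems(1) k(1)] a b
  have s: "word_conv cr (n + 2) s1 s2" and r: "p1 = q1 \<or> face_rel Q n p1 q1" by auto
  from face_rel_valid[OF Cons.prems(1)] have p: "pvalid (n, p)" "length p = 2" by auto
  from passw_valid[OF p(1), of "[k]"] a k p
  have s1: "\<forall>k\<in>set s1. k < n + 2" and p1: "pvalid (n, p1)" by auto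
  from passw_valid[OF p1 k(2)] c length_passw[of p "[k]"] a p
  have t1: "\<forall>k\<in>set t1. k < n + 2" by auto
  have e1: "passw p (k # cs) = (s1 @ t1, p2)"
    using passw_append_right[of p "[k]" cs] a c by simp
  have e2: "passw q (k # cs) = (s2 @ t2, q2)"
    using passw_append_right[of q "[k]" cs] b d by simp
  from r consider "t1 = t2" "p2 = q2" | "word_conv cr (n + 2) t1 t2" "p2 = q2 \<or> face_rel Q n p2 q2"
    using Cons.IH[OF _ k(2)] c d by fastforce
  then show ?case
    by cases (use word_conv_append[OF s _ s1 t1] e1 e2 in auto)
qed

lemma zeta_face_step:
  assumes "face_step Q x x'" "cvalid y" "fst y = fst x"
  shows "\<exists>N c c' w w'. zeta x y = ((N, c), w) \<and> zeta x' y = ((N, c'), w')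
     \<and> word_conv cr N c c' \<and> (w = w' \<or> face_step Q w w')"
proof -
  obtain m ds ds' cs where x: "x = (m, ds)" and x': "x' = (m, ds')" and y: "y = (m, cs)"
    using assms(1,3) unfolding face_step_def by (cases x, cases x', cases y) auto
  from assms(1) obtain a b p q where dd: "ds = a @ p @ b" "ds' = a @ q @ b" and
    r: "face_rel Q (m + length b) p q" and vx: "pvalid x" and vx': "pvalid x'"
    unfolding face_step_def x x' by auto
  define n where "n = m + length b"
  have pq: "length p = 2" "length q = 2" using face_rel_valid[OF r] by auto
  have va: "pvalid (n + 2, a)" and vb: "pvalid (m, b)"
    using vx pq by (auto simp: x dd pvalid_append n_def)
  obtain c1 b' where pb: "passw b cs = (c1, b')" by force
  obtain c2 p' where pp: "passw p c1 = (c2, p')" by force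
  obtain c2' q' where pq': "passw q c1 = (c2', q')" by force
  obtain c3 a' where pa: "passw a c2 = (c3, a')" by force
  obtain c3' a'' where pa': "passw a c2' = (c3', a'')" by force
  have "\<forall>k\<in>set c1. k < n"
    using passw_valid[OF vb, of cs] assms(2) pb by (auto simp: y cvalid_def n_def)
  from passw_face_rel[OF r[folded n_def] this] pp pq'
  have c2: "word_conv cr (n + 2) c2 c2'" and r2: "p' = q' \<or> face_rel Q n p' q'" by auto
  from passw_word_conv[OF c2 va] pa pa'
  have "a'' = a'" and c3: "word_conv cr (n + 2 + length a) c3 c3'" by auto
  have z1: "zeta x y = ((n + 2 + length a, c3), (m, a' @ p' @ b'))"
    using zeta_eq[of ds cs c3 "a' @ p' @ b'"] by (simp add: x y dd pq n_def passw_append_left pb pp pa)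
  have z2: "zeta x' y = ((n + 2 + length a, c3'), (m, a' @ q' @ b'))"
    using zeta_eq[of ds' cs c3' "a' @ q' @ b'"]
    by (simp add: x' y dd pq n_def passw_append_left pb pq' pa' \<open>a'' = a'\<close>)
  have valid': "pvalid (m, a' @ p' @ b')" "pvalid (m, a' @ q' @ b')"
    using zeta_valid[of x y] zeta_valid[of x' y] assms vx vx' z1 z2 by (auto simp: x x' y)
  have "length b' = length b" using length_passw[of b cs] pb by simp
  with r2 have "p' = q' \<or> face_rel Q (m + length b') p' q'" by (simp add: n_def)
  with valid' have "p' = q' \<or> face_step Q (m, a' @ p' @ b') (m, a' @ q' @ b')"
    by (blast intro: face_stepI)
  then show ?thesis using z1 z2 c3 by auto
qed

end

lemma ideal_gen_diff:
  fixes R :: "('b \<Rightarrow>\<^sub>0 'k::field) set"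
  assumes "valid a" "valid b" "vec s - vec t \<in> R \<or> vec t - vec s \<in> R"
    and "bm a s = Some s'" "bm a t = Some t'" "bm s' b = Some w" "bm t' b = Some w'"
  shows "vec w - vec w' \<in> ideal_gen valid bm R"
proof -
  let ?G = "{mulv bm (mulv bm (vec a) r) (vec b) | a b r. valid a \<and> valid b \<and> r \<in> R}"
  have gen: "mulv bm (mulv bm (vec a) r) (vec b) \<in> ?G" if "r \<in> R" for r
    using that assms(1,2) by blast
  have prod: "mulv bm (mulv bm (vec a) (vec s - vec t)) (vec b) = (vec w - vec w' :: 'b \<Rightarrow>\<^sub>0 'k)"
    "mulv bm (mulv bm (vec a) (vec t - vec s)) (vec b) = (vec w' - vec w :: 'b \<Rightarrow>\<^sub>0 'k)"
    by (simp_all add: mulv_vec_vec_diff assms lin_ext_diff opt_vec_def)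
  from assms(3) have "vec w - vec w' \<in> ?G \<or> vec w' - vec w \<in> ?G"
  proof
    assume "vec s - vec t \<in> R"
    from gen[OF this] show ?thesis unfolding prod by (rule disjI1)
  next
    assume "vec t - vec s \<in> R"
    from gen[OF this] show ?thesis unfolding prod by (rule disjI2)
  qed
  then have "vec w - vec w' \<in> pm.span ?G"
  proof
    assume "vec w' - vec w \<in> ?G"
    then have "- (vec w' - vec w) \<in> pm.span ?G" by (intro pm.span_neg pm.span_base)
    then show ?thesis by simp
  qed (rule pm.span_base)
  then show ?thesis by (simp add: ideal_gen_def kspan_eq_span)
qed

lemma tens_ker_span:
  "pm.span (tens_ker cpt validA validB (I :: (_ \<Rightarrow>\<^sub>0 'k::field) set) J) = tens_ker cpt validA validB I J"
  unfolding tens_ker_def kspan_eq_span pm.span_span ..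

lemma tens_ker_left:
  fixes I :: "(_ \<Rightarrow>\<^sub>0 'k::field) set"
  assumes "i \<in> I" "validB w"
  shows "tens cpt i (vec w) \<in> tens_ker cpt validA validB I J"
proof -
  have "vec w \<in> fspace validB" using assms(2) by (simp add: fspace_def vec_def)
  with assms(1) show ?thesis unfolding tens_ker_def kspan_eq_span by (intro pm.span_base) blast
qed

lemma tens_ker_right:
  fixes I :: "(_ \<Rightarrow>\<^sub>0 'k::field) set"
  assumes "j \<in> J" "validA u"
  shows "tens cpt (vec u) j \<in> tens_ker cpt validA validB I J"
proof -
  have "vec u \<in> fspace validA" using assms(2) by (simp add: fspace_def vec_def)
  with assms(1) show ?thesis unfolding tens_ker_def kspan_eq_span by (intro pm.span_base) blast
qed

section \<open>Descent of zeta along a presentation by passable relators\<close>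

locale presented_descent = pass_face_relators cr Q for cr Q +
  fixes RP :: "(pword \<Rightarrow>\<^sub>0 'k::field) set" and RC :: "(cword \<Rightarrow>\<^sub>0 'k) set"
  assumes face_relators: "\<And>r. r \<in> RP \<Longrightarrow> \<exists>n p q. r = vec (n, p) - vec (n, q) \<and> face_rel Q n p q"
    and face_relators_complete: "\<And>n p q. face_rel Q n p q \<Longrightarrow>
      vec (n, p) - vec (n, q) \<in> RP \<or> vec (n, q) - vec (n, p) \<in> RP"
    and chi_relators: "\<And>r. r \<in> RC \<Longrightarrow> \<exists>n p q. r = vec (n, p) - vec (n, q) \<and> cr n p q
      \<and> (\<forall>k\<in>set p. k < n) \<and> (\<forall>k\<in>set q. k < n)"
    and chi_relators_complete: "\<And>n p q. cr n p q \<Longrightarrow>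
      vec (n, p) - vec (n, q) \<in> RC \<or> vec (n, q) - vec (n, p) \<in> RC"
begin

abbreviation "IP \<equiv> ideal_gen pvalid pmul RP"
abbreviation "IC \<equiv> ideal_gen cvalid cmul RC"
abbreviation "Ksrc \<equiv> tens_ker pc_compat pvalid cvalid IP IC"
abbreviation "Ktgt \<equiv> tens_ker cp_compat cvalid pvalid IC IP"

lemma Ktgt_diff_trans: "a - b \<in> Ktgt \<Longrightarrow> b - c \<in> Ktgt \<Longrightarrow> a - c \<in> Ktgt"
  using pm.span_add[of "a - b" Ktgt "b - c"] by (simp add: tens_ker_span)

lemma Ktgt_zero: "0 \<in> Ktgt"
  using pm.span_zero[of Ktgt] by (simp add: tens_ker_span)

lemma word_conv_Ktgt:
  assumes "word_conv cr N u v" "pvalid x" "N = fst x + length (snd x)"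
  shows "vec ((N, u), x) - vec ((N, v), x) \<in> Ktgt"
  using assms(1)
proof (induction rule: rtranclp_induct)
  case base
  then show ?case by (simp add: Ktgt_zero)
next
  case (step w v)
  from step(2) obtain c e p q where "w = c @ p @ e" "v = c @ q @ e" "cr N p q"
    "\<forall>k\<in>set w. k < N" "\<forall>k\<in>set v. k < N" by (rule word_stepE)
  then have "vec (N, w) - vec (N, v) \<in> IC"
    using chi_relators_complete
    by (intro ideal_gen_diff[where a = "(N, c)" and b = "(N, e)" and s = "(N, p)" and t = "(N, q)"
          and s' = "(N, c @ p)" and t' = "(N, c @ q)"])
      (auto simp: cmul_def ccat_def cvalid_def)
  from tens_ker_left[where cpt = cp_compat and validA = cvalid and J = IP and validB = pvalid and w = x, OF this assms(2)]
  have "vec ((N, w), x) - vec ((N, v), x) \<in> Ktgt"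
    by (simp add: tens_vec_right lin_ext_diff tens_basis_def cp_compat_def assms(3))
  with step(3) show ?case by (rule Ktgt_diff_trans)
qed

lemma face_step_Ktgt:
  assumes "face_step Q x x'" "cvalid y" "fst y = fst x + length (snd x)"
  shows "vec (y, x) - vec (y, x') \<in> Ktgt"
proof -
  obtain m ds ds' where x: "x = (m, ds)" and x': "x' = (m, ds')"
    using assms(1) unfolding face_step_def by (cases x, cases x') auto
  from assms(1) obtain a b p q where dd: "ds = a @ p @ b" "ds' = a @ q @ b" and
    r: "face_rel Q (m + length b) p q" and vx: "pvalid (m, ds)"
    unfolding face_step_def x x' by auto
  define n where "n = m + length b"
  have pq: "pvalid (n, p)" "length p = 2" "length q = 2" using face_rel_valid[OF r] n_def by auto
  have "pvalid (n + 2, a)" "pvalid (m, b)"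
    using vx pq by (auto simp: dd pvalid_append n_def)
  then have "vec (m, ds) - vec (m, ds') \<in> IP"
    using pq face_relators_complete[OF r[folded n_def]]
    by (intro ideal_gen_diff[where a = "(n + 2, a)" and b = "(m, b)" and s = "(n, p)" and t = "(n, q)"
          and s' = "(n, a @ p)" and t' = "(n, a @ q)"])
      (simp_all add: pmul_def pcat_def n_def dd)
  from tens_ker_right[where cpt = cp_compat and validB = pvalid and I = IC and validA = cvalid and u = y, OF this assms(2)]
  show ?thesis using pq dd assms(3)
    by (simp add: tens_vec_left lin_ext_diff tens_basis_def cp_compat_def x x')
qed

lemma zeta_face_step_Ktgt:
  assumes "face_step Q x x'" "cvalid y" "fst y = fst x"
  shows "vec (zeta x y) - vec (zeta x' y) \<in> Ktgt"
proof -
  from zeta_face_step[OF assms] obtain N c c' w w' where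
    z: "zeta x y = ((N, c), w)" "zeta x' y = ((N, c'), w')" and
    cc': "word_conv cr N c c'" and ww': "w = w' \<or> face_step Q w w'" by blast
  have "fst x = fst x'" "pvalid x" "pvalid x'" and "length (snd x) = length (snd x')"
    using assms(1) face_rel_valid unfolding face_step_def by auto
  with zeta_valid[of x y] zeta_valid[of x' y] assms z
  have w: "pvalid w" "N = fst w + length (snd w)" and c': "cvalid (N, c')"
    by auto
  have "vec ((N, c), w) - vec ((N, c'), w) \<in> Ktgt"
    by (rule word_conv_Ktgt[OF cc' w])
  moreover have "vec ((N, c'), w) - vec ((N, c'), w') \<in> Ktgt"
    using ww'
  proof
    assume "face_step Q w w'"
    from face_step_Ktgt[OF this c'] w(2) show ?thesis by simp
  qed (simp add: Ktgt_zero)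
  ultimately show ?thesis
    unfolding z by (rule Ktgt_diff_trans)
qed

lemma zeta_word_step_Ktgt:
  assumes "word_step cr m u v" "fst x = m" "pvalid x"
  shows "vec (zeta x (m, u)) - vec (zeta x (m, v)) \<in> Ktgt"
proof -
  from zeta_word_step[OF assms] obtain N c c' w where
    z: "zeta x (m, u) = ((N, c), w)" "zeta x (m, v) = ((N, c'), w)" and cc': "word_conv cr N c c'"
    by blast
  have "cvalid (m, u)" "fst (m, u) = fst x" using assms(1,2) by (auto simp: word_step_def cvalid_def)
  from zeta_valid[OF assms(3) this] z have "pvalid w" "N = fst w + length (snd w)" by auto
  from word_conv_Ktgt[OF cc' this] z show ?thesis by simp
qed

lemma face_ideal_generator:
  assumes "pvalid A" "pvalid B" "r \<in> RP"
  shows "mulv pmul (mulv pmul (vec A) r) (vec B) = 0 \<or>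
    (\<exists>x x'. mulv pmul (mulv pmul (vec A) r) (vec B) = vec x - vec x' \<and> face_step Q x x')"
proof -
  from face_relators[OF assms(3)] obtain n p q where r: "r = vec (n, p) - vec (n, q)"
    and pq: "face_rel Q n p q" by blast
  from face_rel_valid[OF pq] have valid: "pvalid (n, p)" "pvalid (n, q)" "length p = 2" "length q = 2"
    by auto
  obtain k a m b where A: "A = (k, a)" and B: "B = (m, b)" by force
  show ?thesis
  proof (cases "k = n + 2 \<and> n = m + length b")
    case False
    then show ?thesis
      using valid by (auto simp: r mulv_vec_vec_diff A B pmul_def pcat_def opt_vec_def lin_ext_diff)
  next
    case True
    then have "mulv pmul (mulv pmul (vec A) r) (vec B) = vec (m, a @ p @ b) - vec (m, a @ q @ b)"
      using valid by (simp add: r mulv_vec_vec_diff A B pmul_def pcat_def opt_vec_def lin_ext_diff)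
    moreover have "face_step Q (m, a @ p @ b) (m, a @ q @ b)"
      using assms(1,2) valid True pq by (intro face_stepI) (auto simp: A B pvalid_append)
    ultimately show ?thesis by blast
  qed
qed

lemma chi_ideal_generator:
  assumes "cvalid A" "cvalid B" "r \<in> RC"
  shows "mulv cmul (mulv cmul (vec A) r) (vec B) = 0 \<or>
    (\<exists>n u v. mulv cmul (mulv cmul (vec A) r) (vec B) = vec (n, u) - vec (n, v) \<and> word_step cr n u v)"
proof -
  from chi_relators[OF assms(3)] obtain n p q where r: "r = vec (n, p) - vec (n, q)" and pq: "cr n p q"
    and bounded: "\<forall>k\<in>set p. k < n" "\<forall>k\<in>set q. k < n" by blast
  obtain k a m b where A: "A = (k, a)" and B: "B = (m, b)" by force
  show ?thesis
  proof (cases "k = n \<and> m = n")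
    case False
    then show ?thesis by (auto simp: r mulv_vec_vec_diff A B cmul_def ccat_def opt_vec_def lin_ext_diff)
  next
    case True
    then have "mulv cmul (mulv cmul (vec A) r) (vec B) = vec (n, a @ p @ b) - vec (n, a @ q @ b)"
      by (simp add: r mulv_vec_vec_diff A B cmul_def ccat_def opt_vec_def lin_ext_diff)
    moreover have "word_step cr n (a @ p @ b) (a @ q @ b)"
      using assms(1,2) bounded True
      by (intro word_stepI[where c = a and e = b and p = p and q = q and cr = cr and n = n, OF refl refl pq])
        (auto simp: A B cvalid_def)
    ultimately show ?thesis by blast
  qed
qed

lemma zetav_tens_face_generator:
  assumes "pvalid A" "pvalid B" "r \<in> RP" "cvalid c"
  shows "zetav (tens pc_compat (mulv pmul (mulv pmul (vec A) r) (vec B)) (vec c)) \<in> Ktgt"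
  using face_ideal_generator[OF assms(1-3)]
proof (elim disjE exE conjE)
  fix x x' assume g: "mulv pmul (mulv pmul (vec A) r) (vec B) = vec x - vec x'" and step: "face_step Q x x'"
  then have "fst x = fst x'" by (simp add: face_step_def)
  then show ?thesis
    using zeta_face_step_Ktgt[OF step assms(4)] Ktgt_zero
    by (simp add: g tens_vec_right lin_ext_diff tens_basis_def pc_compat_def zetav_eq_lin_ext)
qed (simp add: Ktgt_zero tens_eq_lin_ext zetav_eq_lin_ext)

lemma zetav_tens_chi_generator:
  assumes "pvalid x" "cvalid A" "cvalid B" "r \<in> RC"
  shows "zetav (tens pc_compat (vec x) (mulv cmul (mulv cmul (vec A) r) (vec B))) \<in> Ktgt"
  using chi_ideal_generator[OF assms(2-4)]
proof (elim disjE exE conjE)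
  fix n u v assume g: "mulv cmul (mulv cmul (vec A) r) (vec B) = vec (n, u) - vec (n, v)"
    and step: "word_step cr n u v"
  show ?thesis
    using zeta_word_step_Ktgt[OF step _ assms(1)] Ktgt_zero
    by (simp add: g tens_vec_left lin_ext_diff tens_basis_def pc_compat_def zetav_eq_lin_ext)
qed (simp add: Ktgt_zero tens_eq_lin_ext zetav_eq_lin_ext)

lemma zetav_span_Ktgt:
  assumes "v \<in> pm.span S" "\<And>g. g \<in> S \<Longrightarrow> zetav g \<in> Ktgt"
  shows "zetav v \<in> Ktgt"
proof -
  have "lin_ext (\<lambda>p. vec (case_prod zeta p)) v \<in> pm.span Ktgt"
    using assms(1) by (rule lin_ext_in_span) (use assms(2) in \<open>simp add: zetav_eq_lin_ext pm.span_base\<close>)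
  then show ?thesis by (simp add: zetav_eq_lin_ext tens_ker_span)
qed

lemma zetav_Ksrc:
  assumes "v \<in> Ksrc"
  shows "zetav v \<in> Ktgt"
proof -
  let ?GP = "{mulv pmul (mulv pmul (vec a) r) (vec b) | a b r. pvalid a \<and> pvalid b \<and> r \<in> RP}"
  let ?GC = "{mulv cmul (mulv cmul (vec a) r) (vec b) | a b r. cvalid a \<and> cvalid b \<and> r \<in> RC}"
  have generators: "zetav s \<in> Ktgt"
    if "s \<in> {tens pc_compat i w | i w. i \<in> IP \<and> w \<in> fspace cvalid}
          \<union> {tens pc_compat u j | u j. u \<in> fspace pvalid \<and> j \<in> IC}" for s
  proof -
    from that consider (face) i w where "s = tens pc_compat i w" "i \<in> pm.span ?GP" "w \<in> fspace cvalid"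
      | (chi) u j where "s = tens pc_compat u j" "u \<in> fspace pvalid" "j \<in> pm.span ?GC"
      unfolding ideal_gen_def kspan_eq_span by blast
    then show ?thesis
    proof cases
      case face
      from tens_in_span_left[OF face(2,3), of pc_compat]
      show ?thesis unfolding face(1)
        by (rule zetav_span_Ktgt) (auto intro: zetav_tens_face_generator)
    next
      case chi
      from tens_in_span_right[OF chi(2,3), of pc_compat]
      show ?thesis unfolding chi(1)
        by (rule zetav_span_Ktgt) (auto intro: zetav_tens_chi_generator)
    qed
  qed
  have "v \<in> pm.span ({tens pc_compat i w | i w. i \<in> IP \<and> w \<in> fspace cvalid}
          \<union> {tens pc_compat u j | u j. u \<in> fspace pvalid \<and> j \<in> IC})"
    using assms unfolding tens_ker_def kspan_eq_span .
  from this generators show ?thesis by (rule zetav_span_Ktgt)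
qed

lemma descends: "descends RP RC"
  unfolding descends_def Let_def
  by (auto simp: zetav_Ksrc zeta_pcat zeta_ccat zeta_chi_unit zeta_face_unit Ktgt_zero)

end

section \<open>The braid and symmetric relators pass through zeta\<close>

definition braid_rel :: "nat \<Rightarrow> nat list \<Rightarrow> nat list \<Rightarrow> bool" where
  "braid_rel n p q \<longleftrightarrow>
     (\<exists>a b. a < n \<and> b < n \<and> (a + 2 \<le> b \<or> b + 2 \<le> a) \<and> p = [a, b] \<and> q = [b, a])
   \<or> (\<exists>a. a + 2 \<le> n \<and> (p = [a, a + 1, a] \<and> q = [a + 1, a, a + 1]
                          \<or> p = [a + 1, a, a + 1] \<and> q = [a, a + 1, a]))"

definition sym_rel :: "nat \<Rightarrow> nat list \<Rightarrow> nat list \<Rightarrow> bool" where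
  "sym_rel n p q \<longleftrightarrow> braid_rel n p q \<or> (\<exists>a. a < n \<and> (p = [a, a] \<and> q = [] \<or> p = [] \<and> q = [a, a]))"

lemma braid_rel_sym: "braid_rel n p q \<Longrightarrow> braid_rel n q p"
  unfolding braid_rel_def by auto

lemma sym_rel_sym: "sym_rel n p q \<Longrightarrow> sym_rel n q p"
  unfolding sym_rel_def using braid_rel_sym by blast

lemma braid_rel_sym_rel: "braid_rel n p q \<Longrightarrow> sym_rel n p q"
  unfolding sym_rel_def by blast

text \<open>Unbounded versions of these relators, with head rewriting stated without splitting the
word existentially, so that the simplifier decides a rewriting step between explicit words.\<close>

definition coxeter_rel :: "bool \<Rightarrow> nat list \<Rightarrow> nat list \<Rightarrow> bool" where
  "coxeter_rel invol p q \<longleftrightarrow> (\<exists>x y. p = [x, y] \<and> q = [y, x] \<and> (x + 2 \<le> y \<or> y + 2 \<le> x))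
     \<or> (\<exists>x y. p = [x, y, x] \<and> q = [y, x, y] \<and> (y = x + 1 \<or> x = y + 1))
     \<or> (invol \<and> (\<exists>x. p = [x, x] \<and> q = [] \<or> q = [x, x] \<and> p = []))"

definition coxeter_head_step :: "bool \<Rightarrow> nat list \<Rightarrow> nat list \<Rightarrow> bool" where
  "coxeter_head_step invol u v \<longleftrightarrow> (\<exists>x y r. u = x # y # r \<and> v = y # x # r \<and> (x + 2 \<le> y \<or> y + 2 \<le> x))
     \<or> (\<exists>x y r. u = x # y # x # r \<and> v = y # x # y # r \<and> (y = x + 1 \<or> x = y + 1))
     \<or> (invol \<and> (\<exists>x r. u = x # x # r \<and> v = r \<or> v = x # x # r \<and> u = r))"

fun coxeter_step :: "bool \<Rightarrow> nat list \<Rightarrow> nat list \<Rightarrow> bool" where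
  "coxeter_step invol [] v = coxeter_head_step invol [] v"
| "coxeter_step invol (a # u) v =
     (coxeter_head_step invol (a # u) v \<or> (\<exists>v'. v = a # v' \<and> coxeter_step invol u v'))"

fun coxeter_chain :: "bool \<Rightarrow> nat list list \<Rightarrow> bool" where
  "coxeter_chain invol (u # v # ws) = (coxeter_step invol u v \<and> coxeter_chain invol (v # ws))"
| "coxeter_chain invol _ = True"

lemma coxeter_head_step_split:
  assumes "coxeter_head_step invol u v"
  shows "\<exists>p q e. u = p @ e \<and> v = q @ e \<and> coxeter_rel invol p q"
proof -
  from assms consider
      (comm) x y r where "u = x # y # r" "v = y # x # r" "x + 2 \<le> y \<or> y + 2 \<le> x"
    | (braid) x y r where "u = x # y # x # r" "v = y # x # y # r" "y = x + 1 \<or> x = y + 1"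
    | (invol) x r where "invol" "u = x # x # r" "v = r"
    | (invol') x r where "invol" "v = x # x # r" "u = r"
    unfolding coxeter_head_step_def by blast
  then show ?thesis
  proof cases
    case comm
    then show ?thesis
      by (intro exI[of _ "[x, y]"] exI[of _ "[y, x]"] exI[of _ r]) (simp add: coxeter_rel_def)
  next
    case braid
    then show ?thesis
      by (intro exI[of _ "[x, y, x]"] exI[of _ "[y, x, y]"] exI[of _ r]) (simp add: coxeter_rel_def)
  next
    case invol
    then show ?thesis
      by (intro exI[of _ "[x, x]"] exI[of _ "[]"] exI[of _ r]) (simp add: coxeter_rel_def)
  next
    case invol'
    then show ?thesis
      by (intro exI[of _ "[]"] exI[of _ "[x, x]"] exI[of _ r]) (simp add: coxeter_rel_def)
  qed
qed

lemma coxeter_step_split: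
  "coxeter_step invol u v \<Longrightarrow> \<exists>c p q e. u = c @ p @ e \<and> v = c @ q @ e \<and> coxeter_rel invol p q"
proof (induction u arbitrary: v)
  case Nil
  then show ?case using coxeter_head_step_split by fastforce
next
  case (Cons a u)
  then consider "coxeter_head_step invol (a # u) v" | v' where "v = a # v'" "coxeter_step invol u v'"
    by auto
  then show ?case
  proof cases
    case 1
    then show ?thesis using coxeter_head_step_split by (metis append_Nil)
  next
    case 2
    with Cons.IH obtain c p q e where "u = c @ p @ e" "v' = c @ q @ e" "coxeter_rel invol p q" by blast
    with 2 show ?thesis by (metis Cons_eq_appendI)
  qed
qed

lemma coxeter_chain_word_conv:
  assumes rel: "\<And>p q. coxeter_rel invol p q \<Longrightarrow> \<forall>k\<in>set p. k < n \<Longrightarrow> \<forall>k\<in>set q. k < n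
      \<Longrightarrow> cr n p q"
  shows "coxeter_chain invol (u # ws) \<Longrightarrow> last (u # ws) = v
    \<Longrightarrow> \<forall>w\<in>set (u # ws). \<forall>k\<in>set w. k < n \<Longrightarrow> word_conv cr n u v"
proof (induction ws arbitrary: u)
  case Nil
  then show ?case by simp
next
  case (Cons w ws)
  from Cons.prems(1) have "coxeter_step invol u w" by simp
  then obtain c p q e where u: "u = c @ p @ e" and w: "w = c @ q @ e" and pq: "coxeter_rel invol p q"
    by (blast dest: coxeter_step_split)
  from Cons.prems(3) have bounded: "\<forall>k\<in>set u. k < n" "\<forall>k\<in>set w. k < n" by auto
  then have "cr n p q" using rel[OF pq] u w by simp
  then have "word_step cr n u w" by (rule word_stepI[OF u w _ bounded])
  moreover have "word_conv cr n w v" using Cons by auto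
  ultimately show ?case by (rule converse_rtranclp_into_rtranclp)
qed

lemma coxeter_rel_braid_rel:
  assumes "coxeter_rel False p q" "\<forall>k\<in>set p. k < n" "\<forall>k\<in>set q. k < n"
  shows "braid_rel n p q"
proof -
  from assms(1) consider (comm) x y where "p = [x, y]" "q = [y, x]" "x + 2 \<le> y \<or> y + 2 \<le> x"
    | (braid) x where "p = [x, x + 1, x]" "q = [x + 1, x, x + 1]"
    | (braid') x where "p = [x + 1, x, x + 1]" "q = [x, x + 1, x]"
    unfolding coxeter_rel_def by auto
  then show ?thesis
  proof cases
    case comm
    then show ?thesis using assms(2,3) unfolding braid_rel_def by auto
  next
    case braid
    then show ?thesis using assms(2,3) unfolding braid_rel_def by (intro disjI2 exI[of _ x]) auto
  next
    case braid'
    then show ?thesis using assms(2,3) unfolding braid_rel_def by (intro disjI2 exI[of _ x]) auto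
  qed
qed

lemma coxeter_rel_sym_rel:
  assumes "coxeter_rel True p q" "\<forall>k\<in>set p. k < n" "\<forall>k\<in>set q. k < n"
  shows "sym_rel n p q"
proof (cases "coxeter_rel False p q")
  case True
  then show ?thesis using coxeter_rel_braid_rel assms(2,3) braid_rel_sym_rel by blast
next
  case False
  with assms(1) obtain x where "p = [x, x] \<and> q = [] \<or> p = [] \<and> q = [x, x]"
    unfolding coxeter_rel_def by auto
  then show ?thesis using assms(2,3) unfolding sym_rel_def by auto
qed

lemmas braid_chain = coxeter_chain_word_conv[where invol = False, OF coxeter_rel_braid_rel]
lemmas sym_chain = coxeter_chain_word_conv[where invol = True, OF coxeter_rel_sym_rel]

text \<open>In the following case analyses, ws lists the intermediate words of a rewriting chain.\<close>

lemma pass1_commutation: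
  assumes "a + 2 \<le> b" "b < n" "i \<le> n"
  shows "snd (pass1 i [a, b]) = snd (pass1 i [b, a])
    \<and> word_conv braid_rel (Suc n) (fst (pass1 i [a, b])) (fst (pass1 i [b, a]))"
proof -
  consider "i < a" | "i = a" | "i = a + 1" | "a + 1 < i" "i < b" | "i = b" | "i = b + 1" | "b + 1 < i"
    by linarith
  then show ?thesis
  proof cases
    case 1
    then show ?thesis using assms by (simp add: zgen_def)
      (rule braid_chain[where ws = "[[b + 1, a + 1]]"]; simp add: coxeter_head_step_def)
  next
    case 2
    then show ?thesis using assms by (simp add: zgen_def)
      (rule braid_chain[where ws = "[[a + 1, b + 1, a], [b + 1, a + 1, a]]"]; simp add: coxeter_head_step_def)
  next
    case 3
    then show ?thesis using assms by (simp add: zgen_def)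
      (rule braid_chain[where ws = "[[a, b + 1, a + 1], [b + 1, a, a + 1]]"]; simp add: coxeter_head_step_def)
  next
    case 4
    then show ?thesis using assms by (simp add: zgen_def)
      (rule braid_chain[where ws = "[[b + 1, a]]"]; simp add: coxeter_head_step_def)
  next
    case 5
    then show ?thesis using assms by (simp add: zgen_def)
      (rule braid_chain[where ws = "[[b + 1, a, b], [b + 1, b, a]]"]; simp add: coxeter_head_step_def)
  next
    case 6
    then show ?thesis using assms by (simp add: zgen_def)
      (rule braid_chain[where ws = "[[b, a, b + 1], [b, b + 1, a]]"]; simp add: coxeter_head_step_def)
  next
    case 7
    then show ?thesis using assms by (simp add: zgen_def)
      (rule braid_chain[where ws = "[[b, a]]"]; simp add: coxeter_head_step_def)
  qed
qed

lemma pass1_braid: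
  assumes "a + 2 \<le> n" "i \<le> n"
  shows "snd (pass1 i [a, a + 1, a]) = snd (pass1 i [a + 1, a, a + 1])
    \<and> word_conv braid_rel (Suc n) (fst (pass1 i [a, a + 1, a])) (fst (pass1 i [a + 1, a, a + 1]))"
proof -
  consider "i < a" | "i = a" | "i = a + 1" | "i = a + 2" | "a + 2 < i"
    by linarith
  then show ?thesis
  proof cases
    case 1
    then show ?thesis using assms by (simp add: zgen_def)
      (rule braid_chain[where ws = "[[a + 2, a + 1, a + 2]]"]; simp add: coxeter_head_step_def)
  next
    case 2
    then show ?thesis using assms by (simp add: zgen_def)
      (rule braid_chain[where ws = "[[a + 1, a + 2, a, a + 1, a], [a + 1, a + 2, a + 1, a, a + 1],
         [a + 2, a + 1, a + 2, a, a + 1], [a + 2, a + 1, a, a + 2, a + 1]]"]; simp add: coxeter_head_step_def)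
  next
    case 3
    then show ?thesis using assms by (simp add: zgen_def)
      (rule braid_chain[where ws = "[[a, a + 2, a + 1, a + 2, a], [a + 2, a, a + 1, a + 2, a],
         [a + 2, a, a + 1, a, a + 2], [a + 2, a + 1, a, a + 1, a + 2]]"]; simp add: coxeter_head_step_def)
  next
    case 4
    then show ?thesis using assms by (simp add: zgen_def)
      (rule braid_chain[where ws = "[[a, a + 1, a, a + 2, a + 1], [a + 1, a, a + 1, a + 2, a + 1],
         [a + 1, a, a + 2, a + 1, a + 2], [a + 1, a + 2, a, a + 1, a + 2]]"]; simp add: coxeter_head_step_def)
  next
    case 5
    then show ?thesis using assms by (simp add: zgen_def)
      (rule braid_chain[where ws = "[[a + 1, a, a + 1]]"]; simp add: coxeter_head_step_def)
  qed
qed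

lemma pass1_involution:
  assumes "a < n" "i \<le> n"
  shows "snd (pass1 i [a, a]) = snd (pass1 i []) \<and> word_conv sym_rel (Suc n) (fst (pass1 i [a, a])) []"
proof -
  consider "i < a" | "i = a" | "i = a + 1" | "a + 1 < i"
    by linarith
  then show ?thesis
  proof cases
    case 1
    then show ?thesis using assms by (simp add: zgen_def)
      (rule sym_chain[where ws = "[[]]"]; simp add: coxeter_head_step_def)
  next
    case 2
    then show ?thesis using assms by (simp add: zgen_def)
      (rule sym_chain[where ws = "[[a + 1, a + 1], []]"]; simp add: coxeter_head_step_def)
  next
    case 3
    then show ?thesis using assms by (simp add: zgen_def)
      (rule sym_chain[where ws = "[[a, a], []]"]; simp add: coxeter_head_step_def)
  next
    case 4
    then show ?thesis using assms by (simp add: zgen_def)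
      (rule sym_chain[where ws = "[[]]"]; simp add: coxeter_head_step_def)
  qed
qed

lemma pass1_braid_rel:
  assumes "braid_rel n p q" "i \<le> n"
  shows "snd (pass1 i p) = snd (pass1 i q) \<and> word_conv braid_rel (Suc n) (fst (pass1 i p)) (fst (pass1 i q))"
proof -
  have swap: ?thesis
    if "snd (pass1 i q) = snd (pass1 i p)" "word_conv braid_rel (Suc n) (fst (pass1 i q)) (fst (pass1 i p))"
    using that(1) word_conv_sym[OF braid_rel_sym that(2)] by simp
  from assms(1) consider
      (comm) a b where "a + 2 \<le> b" "b < n" "p = [a, b]" "q = [b, a]"
    | (comm') a b where "a + 2 \<le> b" "b < n" "p = [b, a]" "q = [a, b]"
    | (braid) a where "a + 2 \<le> n" "p = [a, a + 1, a]" "q = [a + 1, a, a + 1]"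
    | (braid') a where "a + 2 \<le> n" "p = [a + 1, a, a + 1]" "q = [a, a + 1, a]"
    unfolding braid_rel_def by blast
  then show ?thesis
  proof cases
    case comm
    then show ?thesis using pass1_commutation assms(2) by simp
  next
    case comm'
    then show ?thesis using pass1_commutation[of a b n i] assms(2) by (intro swap) simp_all
  next
    case braid
    then show ?thesis using pass1_braid assms(2) by simp
  next
    case braid'
    then show ?thesis using pass1_braid[of a n i] assms(2) by (intro swap) simp_all
  qed
qed

lemma pass1_sym_rel:
  assumes "sym_rel n p q" "i \<le> n"
  shows "snd (pass1 i p) = snd (pass1 i q) \<and> word_conv sym_rel (Suc n) (fst (pass1 i p)) (fst (pass1 i q))"
proof -
  from assms(1) consider (braid) "braid_rel n p q"
    | (invol) a where "a < n" "p = [a, a]" "q = []"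
    | (invol') a where "a < n" "p = []" "q = [a, a]"
    unfolding sym_rel_def by blast
  then show ?thesis
  proof cases
    case braid
    then show ?thesis
      using pass1_braid_rel[OF braid assms(2)] by (auto intro: word_conv_mono[OF braid_rel_sym_rel])
  next
    case invol
    then show ?thesis using pass1_involution assms(2) by simp
  next
    case invol'
    with pass1_involution[of a n i] assms(2)
    have "snd (pass1 i q) = snd (pass1 i p)" "word_conv sym_rel (Suc n) (fst (pass1 i q)) (fst (pass1 i p))"
      by simp_all
    then show ?thesis using word_conv_sym[OF sym_rel_sym] by simp
  qed
qed

lemma pass_chi_relators_braid_rel: "pass_chi_relators braid_rel"
  by (rule pass_chi_relators.intro) (rule pass1_braid_rel)

lemma pass_chi_relators_sym_rel: "pass_chi_relators sym_rel"
  by (rule pass_chi_relators.intro) (rule pass1_sym_rel)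

section \<open>The Mag and Simp relators pass through zeta\<close>

lemma passw_face_relator_letter:
  assumes "Q = (<) \<or> Q = (\<le>)" "Q i j" "j \<le> n" "k < n"
  shows "(fst (passw [i, j] [k]) = fst (passw [j + 1, i] [k])
         \<or> coxeter_step False (fst (passw [i, j] [k])) (fst (passw [j + 1, i] [k])))
    \<and> (snd (passw [i, j] [k]) = snd (passw [j + 1, i] [k])
         \<or> face_rel Q n (snd (passw [i, j] [k])) (snd (passw [j + 1, i] [k])))"
  using assms by (auto simp: zgen_def face_rel_pairs coxeter_head_step_def split: if_splits)

lemma passw_face_rel_letter:
  assumes Q: "Q = (<) \<or> Q = (\<le>)"
    and braid: "\<And>n p q. braid_rel n p q \<Longrightarrow> cr n p q" and sym: "\<And>n p q. cr n p q \<Longrightarrow> cr n q p"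
    and "face_rel Q n p q" "k < n"
  shows "word_conv cr (n + 2) (fst (passw p [k])) (fst (passw q [k])) \<and>
    (snd (passw p [k]) = snd (passw q [k]) \<or> face_rel Q n (snd (passw p [k])) (snd (passw q [k])))"
proof -
  have oriented: "word_conv cr (n + 2) (fst (passw [i, j] [k])) (fst (passw [j + 1, i] [k])) \<and>
      (snd (passw [i, j] [k]) = snd (passw [j + 1, i] [k])
        \<or> face_rel Q n (snd (passw [i, j] [k])) (snd (passw [j + 1, i] [k])))"
    if ij: "Q i j" "j \<le> n" for i j
  proof -
    let ?u = "fst (passw [i, j] [k])" and ?v = "fst (passw [j + 1, i] [k])"
    have pv: "pvalid (n, [i, j])" "pvalid (n, [j + 1, i])"
      using ij Q by (auto simp: pvalid_Cons)
    have "\<forall>x\<in>set ?u. x < n + 2" "\<forall>x\<in>set ?v. x < n + 2"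
      using passw_valid[OF pv(1), of "[k]"] passw_valid[OF pv(2), of "[k]"] \<open>k < n\<close> by simp_all
    then have "word_conv braid_rel (n + 2) ?u ?v" if "coxeter_step False ?u ?v"
      using that by (intro braid_chain[where ws = "[?v]"]) auto
    then show ?thesis
      using passw_face_relator_letter[OF Q ij \<open>k < n\<close>] word_conv_mono[OF braid] by auto
  qed
  from \<open>face_rel Q n p q\<close> obtain i j where ij: "Q i j" "j \<le> n"
    and "p = [i, j] \<and> q = [j + 1, i] \<or> p = [j + 1, i] \<and> q = [i, j]"
    unfolding face_rel_def by blast
  then show ?thesis
  proof (elim disjE conjE)
    assume "p = [j + 1, i]" "q = [i, j]"
    then show ?thesis
      using oriented[OF ij] word_conv_sym[of cr "n + 2" "fst (passw q [k])", OF sym] face_rel_sym by auto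
  qed (use oriented[OF ij] in simp)
qed

lemma pass_face_relators_braid_sym:
  assumes "cr = braid_rel \<or> cr = sym_rel" "Q = (<) \<or> Q = (\<le>)"
  shows "pass_face_relators cr Q"
proof (rule pass_face_relators.intro)
  show "pass_chi_relators cr"
    using assms(1) pass_chi_relators_braid_rel pass_chi_relators_sym_rel by blast
  have "braid_rel n p q \<Longrightarrow> cr n p q" "cr n p q \<Longrightarrow> cr n q p" for n p q
    using assms(1) braid_rel_sym_rel braid_rel_sym sym_rel_sym by blast+
  then show "pass_face_relators_axioms cr Q"
    using assms(2) passw_face_rel_letter[OF assms(2)] by unfold_locales auto
qed

lemma face_relators_of_order:
  assumes "RP = {vec (n, [i, j]) - vec (n, [j + 1, i]) | n i j. Q i j \<and> j \<le> n}"
  shows "r \<in> RP \<Longrightarrow> \<exists>n p q. r = vec (n, p) - vec (n, q) \<and> face_rel Q n p q"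
    and "face_rel Q n p q \<Longrightarrow> vec (n, p) - vec (n, q) \<in> RP \<or> vec (n, q) - vec (n, p) \<in> RP"
  unfolding assms face_rel_def by blast+

lemma braid_rels_form:
  "r \<in> braid_rels \<Longrightarrow>
    \<exists>n p q. r = vec (n, p) - vec (n, q) \<and> braid_rel n p q \<and> (\<forall>k\<in>set p. k < n) \<and> (\<forall>k\<in>set q. k < n)"
  unfolding braid_rels_def braid_rel_def by (elim UnE CollectE exE conjE; force)

lemma braid_rels_complete:
  "braid_rel n p q \<Longrightarrow> vec (n, p) - vec (n, q) \<in> braid_rels \<or> vec (n, q) - vec (n, p) \<in> braid_rels"
  unfolding braid_rel_def braid_rels_def by blast

lemma sym_rels_form:
  "r \<in> sym_rels \<Longrightarrow>
    \<exists>n p q. r = vec (n, p) - vec (n, q) \<and> sym_rel n p q \<and> (\<forall>k\<in>set p. k < n) \<and> (\<forall>k\<in>set q. k < n)"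
  unfolding sym_rels_def
  by (elim UnE CollectE exE conjE) (use braid_rels_form braid_rel_sym_rel in \<open>force simp: sym_rel_def\<close>)+

lemma sym_rels_complete:
  "sym_rel n p q \<Longrightarrow> vec (n, p) - vec (n, q) \<in> sym_rels \<or> vec (n, q) - vec (n, p) \<in> sym_rels"
  unfolding sym_rel_def sym_rels_def using braid_rels_complete by blast

lemma descends_mag_simp_braid_sym:
  fixes RP :: "(pword \<Rightarrow>\<^sub>0 'k::field) set"
  assumes "RP = mag_rels \<or> RP = simp_rels" "RC = braid_rels \<or> RC = sym_rels"
  shows "descends RP RC"
proof -
  obtain Q :: "nat \<Rightarrow> nat \<Rightarrow> bool" where Q: "Q = (<) \<and> RP = mag_rels \<or> Q = (\<le>) \<and> RP = simp_rels"
    using assms(1) by blast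
  obtain cr where cr: "cr = braid_rel \<and> RC = braid_rels \<or> cr = sym_rel \<and> RC = sym_rels"
    using assms(2) by blast
  have "presented_descent cr Q RP RC"
  proof (rule presented_descent.intro)
    show "pass_face_relators cr Q"
      using Q cr by (intro pass_face_relators_braid_sym) auto
    show "presented_descent_axioms cr Q RP RC"
      using Q cr
      by unfold_locales (auto dest: face_relators_of_order[OF mag_rels_def] face_relators_of_order[OF simp_rels_def]
          braid_rels_form braid_rels_complete sym_rels_form sym_rels_complete)
  qed
  then show ?thesis by (rule presented_descent.descends)
qed

theorem mainTheorem9:
  shows "descends (mag_rels :: (pword \<Rightarrow>\<^sub>0 'k::field) set) braid_rels
       \<and> descends (simp_rels :: (pword \<Rightarrow>\<^sub>0 'k::field) set) braid_rels
       \<and> descends (mag_rels :: (pword \<Rightarrow>\<^sub>0 'k::field) set) sym_rels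
       \<and> descends (simp_rels :: (pword \<Rightarrow>\<^sub>0 'k::field) set) sym_rels"
  by (intro conjI descends_mag_simp_braid_sym) simp_all

end
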